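(* Assume in addition that $\gcd(l,m)=1$ (so $k=lm$ and $\gcd(n,k)=1$). Then the unique numbers $u_r,v_r$ ($0\le r<k$) of the construction (i.e. those for which each $\mathcal A_r^t$ has slope $\alpha_{r+1}$ and each $\mathcal B_r^t$ has slope $-\beta_{r+1}$) are given by $$u_r=\frac{1}{\tau^n-1}\sum_{j=0}^{k-1}\Big(\alpha_{r+1+jn}\big(\psi_r^{jn+l}-\psi_r^{jn}\big)-\beta_{r+1+l+jn}\big(\psi_r^{(j+1)n}-\psi_r^{jn+l}\big)\Big),$$ $$v_r=\frac{1}{\tau^n-1}\sum_{j=0}^{k-1}\Big(\alpha_{r+1+m+jn}\big(\psi_r^{(j+1)n}-\psi_r^{jn+m}\big)-\beta_{r+1+jn}\big(\psi_r^{jn+m}-\psi_r^{jn}\big)\Big).$$ Equivalently, with $\chi_r=\psi_r^n$, $U_r=\alpha_{r+1}(\psi_r^l-1)-\beta_{r+l+1}(\psi_r^n-\psi_r^l)$ and $V_r=-\beta_{r+1}(\psi_r^m-1)+\alpha_{r+m+1}(\psi_r^n-\psi_r^m)$, they satisfy $u_r-\chi_ru_{r+n}=-U_r$, $v_r-\chi_rv_{r+n}=-V_r$, and $(\tau^n-1)u_r=\sum_{j=0}^{k-1}\psi_r^{jn}U_{r+jn}$, $(\tau^n-1)v_r=\sum_{j=0}^{k-1}\psi_r^{jn}V_{r+jn}$.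
   Context: Setting: $l,m$ positive integers, $n=l+m$, $k=\operatorname{lcm}(l,m)$, weights $\alpha_1,\dots,\alpha_l,\beta_1,\dots,\beta_m\ge0$ not all zero with $\sum\alpha_i=\sum\beta_j$, and $\rho_1,\dots,\rho_k>1$. Indexing conventions: for an integer $r$, $\alpha_r:=\alpha_i$ with $1\le i\le l$, $r\equiv i\pmod l$; $\beta_r:=\beta_j$ with $1\le j\le m$, $r\equiv j\pmod m$; $\rho_r:=\rho_h$ with $1\le h\le k$, $r\equiv h\pmod k$; $u_r,v_r$ are extended $k$-periodically in $r$. Set $\sigma_0=1$, $\sigma_r=\rho_1\cdots\rho_r$ ($1\le r\le k$), $\tau=\rho_1\cdots\rho_k$, and $\sigma_{sk+h}=\tau^s\sigma_h$ for $s\in\mathbb Z$, $0\le h<k$. For integers $r$ and $s\ge0$ let $\psi_r^s=\rho_{r+1}\rho_{r+2}\cdots\rho_{r+s}$ (with $\psi_r^0=1$). Points: ${\bf a}_r^t=\tau^t\sigma_r(1,u_r)$, ${\bf b}_r^t=\tau^t\sigma_r(1,v_r)$ for $r,t\in\mathbb Z$; segments $\mathcal A_r^t=[{\bf a}_r^t,{\bf b}_{r+l}^t]$, $\mathcal B_r^t=[{\bf b}_r^t,{\bf a}_{r+m}^t]$ for $0\le r<k$, $t\in\mathbb Z$. *)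

theory Defs
  imports Complex_Main
begin

text \<open>Periodic index extension: for a family given on indices 1..p, the value at an
  integer r is the value at the unique i in 1..p with r = i mod p.\<close>
definition idx1 :: "(nat \<Rightarrow> real) \<Rightarrow> nat \<Rightarrow> int \<Rightarrow> real" where
  "idx1 f p r = f (nat ((r - 1) mod int p) + 1)"

definition idx0 :: "(nat \<Rightarrow> real) \<Rightarrow> nat \<Rightarrow> int \<Rightarrow> real" where
  "idx0 f p r = f (nat (r mod int p))"

definition tauP :: "(nat \<Rightarrow> real) \<Rightarrow> nat \<Rightarrow> real" where
  "tauP rho k = (\<Prod>i=1..k. rho i)"

definition sigmaP :: "(nat \<Rightarrow> real) \<Rightarrow> nat \<Rightarrow> int \<Rightarrow> real" where
  "sigmaP rho k r = tauP rho k powi (r div int k) * (\<Prod>i=1..nat (r mod int k). rho i)"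

definition psiP :: "(nat \<Rightarrow> real) \<Rightarrow> nat \<Rightarrow> int \<Rightarrow> nat \<Rightarrow> real" where
  "psiP rho k r s = (\<Prod>i=1..s. idx1 rho k (r + int i))"

definition ptA :: "(nat \<Rightarrow> real) \<Rightarrow> nat \<Rightarrow> (nat \<Rightarrow> real) \<Rightarrow> int \<Rightarrow> int \<Rightarrow> real \<times> real" where
  "ptA rho k u r t = (tauP rho k powi t * sigmaP rho k r,
                      tauP rho k powi t * sigmaP rho k r * idx0 u k r)"

definition seg_slope :: "real \<times> real \<Rightarrow> real \<times> real \<Rightarrow> real" where
  "seg_slope p q = (snd q - snd p) / (fst q - fst p)"

end

theory Submission
  imports Defs
begin

text \<open>After cancelling the common factor $\tau^t\sigma_r$ of its endpoints, the slope
  condition on a segment is a linear relation between two consecutive ordinates.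
  Chaining a segment $\mathcal A_r$ with the following $\mathcal B_{r+l}$ gives the twisted
  recurrence $u_r - \psi_r^n u_{r+n} = -U_r$ (and likewise for $v$). Iterating it $k$
  times shifts the index by $kn \equiv 0 \pmod k$ and produces the factor
  $\psi_r^{kn} = \tau^n \neq 1$, which yields the sum formula; conversely the sum formula
  gives back the recurrence, and the recurrences give back the slope conditions because
  the homogeneous coupled system has no nonzero periodic solution.\<close>

lemma idx1_add_multiple:
  assumes "p dvd k"
  shows "idx1 f p (x + int k) = idx1 f p x"
proof -
  obtain c where "k = p * c" using assms by blast
  then have "(x + int k - 1) mod int p = (x - 1) mod int p"
    by (metis add.commute add_diff_eq mod_mult_self2 of_nat_mult mult.commute)
  then show ?thesis unfolding idx1_def by simp
qed

lemma idx0_add_period: "idx0 f k (x + int k) = idx0 f k x"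
  unfolding idx0_def by simp

lemma psiP_0 [simp]: "psiP rho k r 0 = 1"
  unfolding psiP_def by simp

lemma psiP_Suc: "psiP rho k r (Suc s) = psiP rho k r s * idx1 rho k (r + int (Suc s))"
  unfolding psiP_def by (simp add: prod.nat_ivl_Suc' mult.commute)

lemma psiP_add: "psiP rho k r (a + b) = psiP rho k r a * psiP rho k (r + int a) b"
proof (induction b)
  case 0
  then show ?case by simp
next
  case (Suc b)
  have "psiP rho k r (a + Suc b) = psiP rho k r (a + b) * idx1 rho k (r + int (Suc (a + b)))"
    using psiP_Suc[of rho k r "a + b"] by simp
  also have "\<dots> = psiP rho k r a * (psiP rho k (r + int a) b * idx1 rho k (r + int a + int (Suc b)))"
    using Suc by (simp add: algebra_simps)
  also have "\<dots> = psiP rho k r a * psiP rho k (r + int a) (Suc b)"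
    using psiP_Suc[of rho k "r + int a" b] by simp
  finally show ?case .
qed

lemma psiP_add_period: "psiP rho k (r + int k) s = psiP rho k r s"
  unfolding psiP_def
  by (rule prod.cong) (use idx1_add_multiple[of k k rho "r + int _"] in \<open>simp_all add: algebra_simps\<close>)

lemma periodic_add_mult:
  assumes "\<And>r. f (r + int k) = f r"
  shows "f (r + int k * q) = f r"
proof (induction q rule: int_induct[where k = 0])
  case base
  then show ?case by simp
next
  case (step1 i)
  have "f (r + int k * (i + 1)) = f (r + int k * i + int k)" by (simp add: algebra_simps)
  then show ?case using assms step1 by simp
next
  case (step2 i)
  have "f (r + int k * i) = f (r + int k * (i - 1) + int k)" by (simp add: algebra_simps)
  then show ?case using assms step2 by simp
qed

lemma periodic_mod:
  assumes "\<And>r. f (r + int k) = f r"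
  shows "f (r mod int k) = f r"
  using periodic_add_mult[of f k "r mod int k" "r div int k", OF assms]
  by (simp add: mult.commute)

lemma periodic_iff_on_period:
  assumes "0 < k" and "\<And>r. P (r + int k) = P r"
  shows "(\<forall>r\<in>{0..<int k}. P r) \<longleftrightarrow> (\<forall>r. P r)"
proof
  assume "\<forall>r\<in>{0..<int k}. P r"
  then show "\<forall>r. P r"
    using periodic_mod[of P k, OF assms(2)] assms(1)
    by (metis atLeastLessThan_iff of_nat_0_less_iff pos_mod_bound pos_mod_sign)
qed simp

locale growth_factors =
  fixes rho :: "nat \<Rightarrow> real" and k :: nat
  assumes k_pos: "0 < k" and rho_gt_1: "\<forall>h\<in>{1..k}. 1 < rho h"
begin

lemma idx1_gt_1: "1 < idx1 rho k x"
proof -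
  have "0 \<le> (x - 1) mod int k" "(x - 1) mod int k < int k" using k_pos by auto
  then have "nat ((x - 1) mod int k) + 1 \<in> {1..k}" by auto
  then show ?thesis using rho_gt_1 unfolding idx1_def by blast
qed

lemma psiP_ge_1: "1 \<le> psiP rho k r s"
  unfolding psiP_def using idx1_gt_1 by (intro prod_ge_1) (auto intro: less_imp_le)

lemma psiP_gt_1:
  assumes "0 < s"
  shows "1 < psiP rho k r s"
proof -
  obtain s' where s: "s = Suc s'" using assms by (cases s) auto
  have "1 \<le> psiP rho k r s'" "1 < idx1 rho k (r + int (Suc s'))"
    by (rule psiP_ge_1, rule idx1_gt_1)
  then show ?thesis unfolding s psiP_Suc
    using mult_right_mono[of 1 "psiP rho k r s'" "idx1 rho k (r + int (Suc s'))"] by linarith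
qed

lemma psiP_period_0: "psiP rho k 0 k = tauP rho k"
  unfolding psiP_def tauP_def
proof (rule prod.cong)
  fix i assume i: "i \<in> {1..k}"
  then have "(int i - 1) mod int k = int i - 1" and "Suc (nat (int i - 1)) = i" by auto
  then show "idx1 rho k (0 + int i) = rho i" unfolding idx1_def by simp
qed simp

text \<open>A product over a full period does not depend on where the period starts: moving
  the window by one multiplies and divides by the same factor, which is nonzero.\<close>
lemma psiP_period: "psiP rho k r k = tauP rho k"
proof -
  have shift: "psiP rho k (r + 1) k = psiP rho k r k" for r
  proof -
    have "psiP rho k r k * psiP rho k r 1 = psiP rho k r 1 * psiP rho k (r + 1) k"
      using psiP_add[of rho k r k 1] psiP_add[of rho k r 1 k] psiP_add_period[of rho k r 1]
      by (simp add: add.commute)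
    moreover have "psiP rho k r 1 \<noteq> 0" using psiP_ge_1[of r 1] by linarith
    ultimately show ?thesis by (simp add: mult.commute)
  qed
  have "psiP rho k r k = psiP rho k 0 k"
  proof (induction r rule: int_induct[where k = 0])
    case (step2 i)
    then show ?case using shift[of "i - 1"] by simp
  qed (use shift in simp_all)
  then show ?thesis using psiP_period_0 by simp
qed

lemma psiP_mult_period: "psiP rho k r (k * j) = tauP rho k ^ j"
proof (induction j)
  case (Suc j)
  have "psiP rho k r (k * Suc j) = psiP rho k r (k * j) * psiP rho k (r + int (k * j)) k"
    using psiP_add[of rho k r "k * j" k] by (simp add: add.commute)
  then show ?case using Suc psiP_period by simp
qed simp

lemma tauP_gt_1: "1 < tauP rho k"
  using psiP_gt_1[of k 0] psiP_period k_pos by simp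

lemma tauP_power_neq_1: "0 < n \<Longrightarrow> tauP rho k ^ n \<noteq> 1"
  using one_less_power[OF tauP_gt_1, of n] by simp

lemma sigmaP_add_1: "sigmaP rho k (r + 1) = sigmaP rho k r * idx1 rho k (r + 1)"
proof -
  define q h where "q = r div int k" and "h = r mod int k"
  have r: "r = q * int k + h" unfolding q_def h_def by simp
  have h: "0 \<le> h" "h < int k" unfolding h_def using k_pos by auto
  have rho_h: "idx1 rho k (r + 1) = rho (Suc (nat h))" unfolding idx1_def h_def by simp
  show ?thesis
  proof (cases "h + 1 < int k")
    case True
    then have "(r + 1) div int k = q" "(r + 1) mod int k = h + 1" "nat (h + 1) = Suc (nat h)"
      using h unfolding r by (simp_all add: add.assoc)
    then show ?thesis unfolding sigmaP_def rho_h by (simp add: h_def q_def mult.assoc)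
  next
    case False
    then have "h + 1 = int k" using h by simp
    then have hk: "Suc (nat h) = k" and "(r + 1) div int k = q + 1" "(r + 1) mod int k = 0"
      using h k_pos unfolding r by (simp_all add: add.assoc)
    moreover have "(\<Prod>i=1..nat h. rho i) * rho k = tauP rho k"
      unfolding tauP_def using hk[symmetric] by (simp add: prod.nat_ivl_Suc' mult.commute)
    ultimately show ?thesis unfolding sigmaP_def rho_h hk
      using tauP_gt_1 by (simp add: h_def q_def power_int_add mult.assoc)
  qed
qed

lemma sigmaP_add: "sigmaP rho k (r + int s) = sigmaP rho k r * psiP rho k r s"
proof (induction s)
  case (Suc s)
  have "sigmaP rho k (r + int (Suc s)) = sigmaP rho k (r + int s + 1)"
    by (simp add: algebra_simps)
  also have "\<dots> = sigmaP rho k (r + int s) * idx1 rho k (r + int s + 1)"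
    by (rule sigmaP_add_1)
  also have "\<dots> = sigmaP rho k r * psiP rho k r (Suc s)"
    using Suc by (simp add: psiP_Suc algebra_simps)
  finally show ?case .
qed simp

lemma sigmaP_pos: "0 < sigmaP rho k r"
proof -
  have "(\<Prod>i=1..nat (r mod int k). rho i) > 0"
  proof (rule prod_pos)
    fix i assume "i \<in> {1..nat (r mod int k)}"
    moreover have "r mod int k < int k" using k_pos by simp
    ultimately have "i \<in> {1..k}" by auto
    then show "0 < rho i" using rho_gt_1 by force
  qed
  then show ?thesis unfolding sigmaP_def using tauP_gt_1 by simp
qed

lemma seg_slope_ptA_iff:
  assumes "0 < s"
  shows "seg_slope (ptA rho k u r t) (ptA rho k v (r + int s) t) = c \<longleftrightarrow>
         psiP rho k r s * idx0 v k (r + int s) - idx0 u k r = c * (psiP rho k r s - 1)"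
proof -
  define S where "S = tauP rho k powi t * sigmaP rho k r"
  define P where "P = psiP rho k r s"
  have "S \<noteq> 0" unfolding S_def using tauP_gt_1 sigmaP_pos[of r] by simp
  moreover have "P - 1 \<noteq> 0" unfolding P_def using psiP_gt_1[OF assms, of r] by simp
  moreover have "seg_slope (ptA rho k u r t) (ptA rho k v (r + int s) t)
      = (S * (P * idx0 v k (r + int s) - idx0 u k r)) / (S * (P - 1))"
    unfolding seg_slope_def ptA_def sigmaP_add S_def P_def by (simp add: algebra_simps)
  ultimately show ?thesis unfolding P_def by (simp add: divide_eq_eq)
qed

lemma twisted_rec_iterate:
  assumes rec: "\<And>r. f r - psiP rho k r n * f (r + int n) = - g r"
  shows "f r = psiP rho k r (j * n) * f (r + int (j * n))
               - (\<Sum>i<j. psiP rho k r (i * n) * g (r + int (i * n)))"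
proof (induction j)
  case (Suc j)
  have step: "f (r + int (j * n)) = psiP rho k (r + int (j * n)) n * f (r + int (Suc j * n))
                                    - g (r + int (j * n))"
    using rec[of "r + int (j * n)"] by (simp add: algebra_simps)
  have "psiP rho k r (j * n) * psiP rho k (r + int (j * n)) n = psiP rho k r (Suc j * n)"
    using psiP_add[of rho k r "j * n" n] by (simp add: add.commute)
  then show ?case
    using Suc unfolding step by (simp add: algebra_simps)
qed simp

lemma twisted_rec_imp_sum_formula:
  assumes rec: "\<And>r. f r - psiP rho k r n * f (r + int n) = - g r"
    and per: "\<And>r. f (r + int k) = f r"
  shows "(tauP rho k ^ n - 1) * f r = (\<Sum>j=0..<k. psiP rho k r (j * n) * g (r + int (j * n)))"
proof -
  have "f r = psiP rho k r (k * n) * f (r + int (k * n))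
              - (\<Sum>i<k. psiP rho k r (i * n) * g (r + int (i * n)))"
    by (rule twisted_rec_iterate[OF rec])
  moreover have "f (r + int (k * n)) = f r"
    using periodic_add_mult[of f k r "int n", OF per] by simp
  ultimately show ?thesis by (simp add: psiP_mult_period atLeast0LessThan algebra_simps)
qed

lemma sum_formula_imp_twisted_rec:
  assumes "0 < n"
    and sum: "\<And>r. (tauP rho k ^ n - 1) * f r
                   = (\<Sum>j=0..<k. psiP rho k r (j * n) * g (r + int (j * n)))"
    and per: "\<And>r. g (r + int k) = g r"
  shows "f r - psiP rho k r n * f (r + int n) = - g r"
proof -
  define h where "h j = psiP rho k r (j * n) * g (r + int (j * n))" for j
  have "psiP rho k r n * (tauP rho k ^ n - 1) * f (r + int n) = (\<Sum>j<k. h (Suc j))"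
    unfolding mult.assoc sum[of "r + int n"] sum_distrib_left atLeast0LessThan h_def
  proof (rule sum.cong)
    fix j
    have "psiP rho k r (n + j * n) = psiP rho k r n * psiP rho k (r + int n) (j * n)"
      by (rule psiP_add)
    then show "psiP rho k r n * (psiP rho k (r + int n) (j * n) * g (r + int n + int (j * n)))
               = psiP rho k r (Suc j * n) * g (r + int (Suc j * n))"
      by (simp add: algebra_simps)
  qed simp
  also have "\<dots> = (\<Sum>j<k. h j) + h k - h 0"
    using sum.lessThan_Suc_shift[of h k] sum.lessThan_Suc[of h k] by simp
  also have "h k = tauP rho k ^ n * g r"
    using periodic_add_mult[of g k r "int n", OF per] psiP_mult_period[of r n]
    unfolding h_def by simp
  also have "(\<Sum>j<k. h j) = (tauP rho k ^ n - 1) * f r"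
    using sum[of r] unfolding h_def atLeast0LessThan by simp
  finally have "(tauP rho k ^ n - 1) * (f r - psiP rho k r n * f (r + int n))
                = (tauP rho k ^ n - 1) * (- g r)"
    unfolding h_def by (simp add: algebra_simps)
  moreover have "tauP rho k ^ n - 1 \<noteq> 0" using tauP_power_neq_1[OF assms(1)] by simp
  ultimately show ?thesis by (metis mult_left_cancel mult_minus_right)
qed

lemma twisted_rec_iff_sum_formula:
  assumes "0 < n" and "\<And>r. f (r + int k) = f r" and "\<And>r. g (r + int k) = g r"
  shows "(\<forall>r. f r - psiP rho k r n * f (r + int n) = - g r) \<longleftrightarrow>
         (\<forall>r. (tauP rho k ^ n - 1) * f r
              = (\<Sum>j=0..<k. psiP rho k r (j * n) * g (r + int (j * n))))"
  using twisted_rec_imp_sum_formula[of f n g] sum_formula_imp_twisted_rec[of n f g] assms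
  by blast

text \<open>Eliminating $f$ gives a homogeneous recurrence for $e$, whose only periodic
  solution is $0$ by the sum formula.\<close>
lemma coupled_twisted_rec_zero:
  assumes "0 < l + m"
    and ef: "\<And>r. e r + psiP rho k r l * f (r + int l) = 0"
    and fe: "\<And>r. f r + psiP rho k r m * e (r + int m) = 0"
    and per: "\<And>r. e (r + int k) = e r"
  shows "e r = 0 \<and> f r = 0"
proof -
  have rec: "e r - psiP rho k r (l + m) * e (r + int (l + m)) = - 0" for r
  proof -
    have "f (r + int l) = - psiP rho k (r + int l) m * e (r + int (l + m))"
      using fe[of "r + int l"] by (simp add: add.assoc)
    then show ?thesis using ef[of r] psiP_add[of rho k r l m] by (simp add: algebra_simps)
  qed
  have e0: "e x = 0" for x
    using twisted_rec_imp_sum_formula[OF rec per, of x] tauP_power_neq_1[OF assms(1)] by simp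
  have "psiP rho k (r - int l) l * f r = 0" using ef[of "r - int l"] e0 by simp
  moreover have "1 \<le> psiP rho k (r - int l) l" by (rule psiP_ge_1)
  ultimately show ?thesis using e0 by simp
qed

end

locale slope_construction =
  fixes l m :: nat and alpha beta rho u v :: "nat \<Rightarrow> real"
  assumes l_pos: "0 < l" and m_pos: "0 < m" and rho_gt_1_on_period: "\<forall>h\<in>{1..lcm l m}. 1 < rho h"
begin

abbreviation "n \<equiv> l + m"
abbreviation "k \<equiv> lcm l m"
abbreviation "\<alpha> \<equiv> idx1 alpha l"
abbreviation "\<beta> \<equiv> idx1 beta m"
abbreviation "\<psi> \<equiv> psiP rho k"
abbreviation "\<tau> \<equiv> tauP rho k"
abbreviation "uu \<equiv> idx0 u k"
abbreviation "vv \<equiv> idx0 v k"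

sublocale growth_factors rho k
  using l_pos m_pos rho_gt_1_on_period by unfold_locales (simp_all add: lcm_pos_nat)

text \<open>The slope conditions on $\mathcal A_r^t$ and $\mathcal B_r^t$ read
  \<open>defect_A r = 0\<close> and \<open>defect_B r = 0\<close> once the factor $\tau^t\sigma_r$ is cancelled.\<close>
definition defect_A :: "int \<Rightarrow> real" where
  "defect_A r = \<psi> r l * vv (r + int l) - uu r - \<alpha> (r + 1) * (\<psi> r l - 1)"

definition defect_B :: "int \<Rightarrow> real" where
  "defect_B r = \<psi> r m * uu (r + int m) - vv r + \<beta> (r + 1) * (\<psi> r m - 1)"

definition U :: "int \<Rightarrow> real" where
  "U r = \<alpha> (r + 1) * (\<psi> r l - 1) - \<beta> (r + int l + 1) * (\<psi> r n - \<psi> r l)"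

definition V :: "int \<Rightarrow> real" where
  "V r = - \<beta> (r + 1) * (\<psi> r m - 1) + \<alpha> (r + int m + 1) * (\<psi> r n - \<psi> r m)"

lemma alpha_add_period: "\<alpha> (r + int k) = \<alpha> r"
  by (rule idx1_add_multiple) simp

lemma beta_add_period: "\<beta> (r + int k) = \<beta> r"
  by (rule idx1_add_multiple) simp

lemma U_add_period: "U (r + int k) = U r"
  using alpha_add_period[of "r + 1"] beta_add_period[of "r + int l + 1"] psiP_add_period[of rho k r]
  unfolding U_def by (simp add: algebra_simps)

lemma V_add_period: "V (r + int k) = V r"
  using beta_add_period[of "r + 1"] alpha_add_period[of "r + int m + 1"] psiP_add_period[of rho k r]
  unfolding V_def by (simp add: algebra_simps)

lemma defect_A_add_period: "defect_A (r + int k) = defect_A r"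
  using alpha_add_period[of "r + 1"] idx0_add_period[of v k "r + int l"] idx0_add_period[of u k r]
    psiP_add_period[of rho k r]
  unfolding defect_A_def by (simp add: algebra_simps)

lemma defect_B_add_period: "defect_B (r + int k) = defect_B r"
  using beta_add_period[of "r + 1"] idx0_add_period[of u k "r + int m"] idx0_add_period[of v k r]
    psiP_add_period[of rho k r]
  unfolding defect_B_def by (simp add: algebra_simps)

lemma slope_conditions_iff_defects_zero:
  "(\<forall>r\<in>{0..<int k}. \<forall>t::int.
      seg_slope (ptA rho k u r t) (ptA rho k v (r + int l) t) = \<alpha> (r + 1) \<and>
      seg_slope (ptA rho k v r t) (ptA rho k u (r + int m) t) = - \<beta> (r + 1))
   \<longleftrightarrow> (\<forall>r. defect_A r = 0 \<and> defect_B r = 0)"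
proof -
  have "seg_slope (ptA rho k u r t) (ptA rho k v (r + int l) t) = \<alpha> (r + 1) \<longleftrightarrow> defect_A r = 0"
    for r t using seg_slope_ptA_iff[OF l_pos] unfolding defect_A_def by simp
  moreover have "seg_slope (ptA rho k v r t) (ptA rho k u (r + int m) t) = - \<beta> (r + 1)
                 \<longleftrightarrow> defect_B r = 0" for r t
    using seg_slope_ptA_iff[OF m_pos, of v r t u "- \<beta> (r + 1)"] unfolding defect_B_def
    by (simp add: algebra_simps)
  ultimately show ?thesis
    using periodic_iff_on_period[OF k_pos, of "\<lambda>r. defect_A r = 0 \<and> defect_B r = 0"]
    by (simp add: defect_A_add_period defect_B_add_period)
qed

lemma defect_A_chain:
  "defect_A r + \<psi> r l * defect_B (r + int l) = \<psi> r n * uu (r + int n) - uu r - U r"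
  using psiP_add[of rho k r l m] unfolding defect_A_def defect_B_def U_def
  by (simp add: algebra_simps)

lemma defect_B_chain:
  "defect_B r + \<psi> r m * defect_A (r + int m) = \<psi> r n * vv (r + int n) - vv r - V r"
  using psiP_add[of rho k r m l] unfolding defect_A_def defect_B_def V_def
  by (simp add: algebra_simps)

lemma defects_zero_iff_twisted_recs:
  "(\<forall>r. defect_A r = 0 \<and> defect_B r = 0) \<longleftrightarrow>
   (\<forall>r. uu r - \<psi> r n * uu (r + int n) = - U r \<and> vv r - \<psi> r n * vv (r + int n) = - V r)"
proof
  assume "\<forall>r. defect_A r = 0 \<and> defect_B r = 0"
  then show "\<forall>r. uu r - \<psi> r n * uu (r + int n) = - U r \<and> vv r - \<psi> r n * vv (r + int n) = - V r"
    using defect_A_chain defect_B_chain by (simp add: algebra_simps)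
next
  assume "\<forall>r. uu r - \<psi> r n * uu (r + int n) = - U r \<and> vv r - \<psi> r n * vv (r + int n) = - V r"
  then show "\<forall>r. defect_A r = 0 \<and> defect_B r = 0"
    using coupled_twisted_rec_zero[of l m defect_A defect_B] l_pos defect_A_add_period
      defect_A_chain defect_B_chain by (simp add: algebra_simps)
qed

definition closed_form_u :: "int \<Rightarrow> real" where
  "closed_form_u r = (1 / (\<tau> ^ n - 1)) * (\<Sum>j=0..<k.
        \<alpha> (r + 1 + int (j * n)) * (\<psi> r (j * n + l) - \<psi> r (j * n))
      - \<beta> (r + 1 + int l + int (j * n)) * (\<psi> r ((j + 1) * n) - \<psi> r (j * n + l)))"

lemma closed_form_u_eq:
  "closed_form_u r = 1 / (\<tau> ^ n - 1) * (\<Sum>j=0..<k. \<psi> r (j * n) * U (r + int (j * n)))"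
proof -
  have "\<psi> r (j * n + s) = \<psi> r (j * n) * \<psi> (r + int (j * n)) s" for j s
    by (rule psiP_add)
  moreover have "\<psi> r ((j + 1) * n) = \<psi> r (j * n) * \<psi> (r + int (j * n)) n" for j
    using psiP_add[of rho k r "j * n" n] by (simp add: add.commute)
  ultimately show ?thesis
    unfolding closed_form_u_def U_def
    by (intro arg_cong[where f = "(*) _"] sum.cong) (simp_all add: algebra_simps)
qed

definition closed_form_v :: "int \<Rightarrow> real" where
  "closed_form_v r = (1 / (\<tau> ^ n - 1)) * (\<Sum>j=0..<k.
        \<alpha> (r + 1 + int m + int (j * n)) * (\<psi> r ((j + 1) * n) - \<psi> r (j * n + m))
      - \<beta> (r + 1 + int (j * n)) * (\<psi> r (j * n + m) - \<psi> r (j * n)))"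

lemma closed_form_v_eq:
  "closed_form_v r = 1 / (\<tau> ^ n - 1) * (\<Sum>j=0..<k. \<psi> r (j * n) * V (r + int (j * n)))"
proof -
  have "\<psi> r (j * n + s) = \<psi> r (j * n) * \<psi> (r + int (j * n)) s" for j s
    by (rule psiP_add)
  moreover have "\<psi> r ((j + 1) * n) = \<psi> r (j * n) * \<psi> (r + int (j * n)) n" for j
    using psiP_add[of rho k r "j * n" n] by (simp add: add.commute)
  ultimately show ?thesis
    unfolding closed_form_v_def V_def
    by (intro arg_cong[where f = "(*) _"] sum.cong) (simp_all add: algebra_simps)
qed

lemma twisted_recs_iff_sum_formulas:
  "(\<forall>r. uu r - \<psi> r n * uu (r + int n) = - U r \<and> vv r - \<psi> r n * vv (r + int n) = - V r) \<longleftrightarrow>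
   (\<forall>r. (\<tau> ^ n - 1) * uu r = (\<Sum>j=0..<k. \<psi> r (j * n) * U (r + int (j * n))) \<and>
        (\<tau> ^ n - 1) * vv r = (\<Sum>j=0..<k. \<psi> r (j * n) * V (r + int (j * n))))"
  using twisted_rec_iff_sum_formula[of n uu U] twisted_rec_iff_sum_formula[of n vv V]
    l_pos idx0_add_period U_add_period V_add_period
  unfolding all_conj_distrib by simp

lemma sum_formulas_iff_closed_forms:
  "(\<forall>r. (\<tau> ^ n - 1) * uu r = (\<Sum>j=0..<k. \<psi> r (j * n) * U (r + int (j * n))) \<and>
        (\<tau> ^ n - 1) * vv r = (\<Sum>j=0..<k. \<psi> r (j * n) * V (r + int (j * n)))) \<longleftrightarrow>
   (\<forall>r\<in>{0..<int k}. uu r = closed_form_u r \<and> vv r = closed_form_v r)"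
proof -
  let ?P = "\<lambda>r. (\<tau> ^ n - 1) * uu r = (\<Sum>j=0..<k. \<psi> r (j * n) * U (r + int (j * n))) \<and>
                (\<tau> ^ n - 1) * vv r = (\<Sum>j=0..<k. \<psi> r (j * n) * V (r + int (j * n)))"
  have sum_add_period: "(\<Sum>j=0..<k. \<psi> (r + int k) (j * n) * W (r + int k + int (j * n)))
                      = (\<Sum>j=0..<k. \<psi> r (j * n) * W (r + int (j * n)))"
    if "\<And>r. W (r + int k) = W r" for W r
    using that[of "r + int (_ * n)"] by (intro sum.cong) (simp_all add: psiP_add_period algebra_simps)
  have "?P (r + int k) = ?P r" for r
    by (simp only: sum_add_period[of U, OF U_add_period] sum_add_period[of V, OF V_add_period] idx0_add_period)
  then have "(\<forall>r. ?P r) \<longleftrightarrow> (\<forall>r\<in>{0..<int k}. ?P r)"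
    using periodic_iff_on_period[OF k_pos, of ?P] by simp
  moreover have "\<tau> ^ n - 1 \<noteq> 0" using tauP_power_neq_1 l_pos by simp
  then have "?P r \<longleftrightarrow> uu r = closed_form_u r \<and> vv r = closed_form_v r" for r
    unfolding closed_form_u_eq closed_form_v_eq by (auto simp: field_simps)
  ultimately show ?thesis by simp
qed

end

theorem mainTheorem2:
  fixes l m :: nat
    and alpha beta rho u v :: "nat \<Rightarrow> real"
  assumes "0 < l" and "0 < m" and "coprime l m"
    and "\<forall>i\<in>{1..l}. alpha i \<ge> 0" and "\<forall>j\<in>{1..m}. beta j \<ge> 0"
    and "(\<exists>i\<in>{1..l}. alpha i \<noteq> 0) \<or> (\<exists>j\<in>{1..m}. beta j \<noteq> 0)"
    and "(\<Sum>i=1..l. alpha i) = (\<Sum>j=1..m. beta j)"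
    and "\<forall>h\<in>{1..lcm l m}. rho h > 1"
  shows
   "let n = l + m; k = lcm l m; \<tau> = tauP rho k;
        \<alpha> = idx1 alpha l; \<beta> = idx1 beta m; \<psi> = psiP rho k;
        uu = idx0 u k; vv = idx0 v k;
        a = ptA rho k u; b = ptA rho k v;
        conds = (\<forall>r\<in>{0..<int k}. \<forall>t::int.
                   seg_slope (a r t) (b (r + int l) t) = \<alpha> (r + 1) \<and>
                   seg_slope (b r t) (a (r + int m) t) = - \<beta> (r + 1));
        Uf = (\<lambda>r. (1 / (\<tau> ^ n - 1)) * (\<Sum>j=0..<k.
                 \<alpha> (r + 1 + int (j * n)) * (\<psi> r (j * n + l) - \<psi> r (j * n))
               - \<beta> (r + 1 + int l + int (j * n)) * (\<psi> r ((j + 1) * n) - \<psi> r (j * n + l))));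
        Vf = (\<lambda>r. (1 / (\<tau> ^ n - 1)) * (\<Sum>j=0..<k.
                 \<alpha> (r + 1 + int m + int (j * n)) * (\<psi> r ((j + 1) * n) - \<psi> r (j * n + m))
               - \<beta> (r + 1 + int (j * n)) * (\<psi> r (j * n + m) - \<psi> r (j * n))));
        \<chi> = (\<lambda>r. \<psi> r n);
        U = (\<lambda>r. \<alpha> (r + 1) * (\<psi> r l - 1) - \<beta> (r + int l + 1) * (\<psi> r n - \<psi> r l));
        V = (\<lambda>r. - \<beta> (r + 1) * (\<psi> r m - 1) + \<alpha> (r + int m + 1) * (\<psi> r n - \<psi> r m))
    in (conds \<longleftrightarrow> (\<forall>r\<in>{0..<int k}. uu r = Uf r \<and> vv r = Vf r)) \<and>
       (conds \<longrightarrow> (\<forall>r::int.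
            uu r - \<chi> r * uu (r + int n) = - U r \<and>
            vv r - \<chi> r * vv (r + int n) = - V r \<and>
            (\<tau> ^ n - 1) * uu r = (\<Sum>j=0..<k. \<psi> r (j * n) * U (r + int (j * n))) \<and>
            (\<tau> ^ n - 1) * vv r = (\<Sum>j=0..<k. \<psi> r (j * n) * V (r + int (j * n)))))"
proof -
  interpret slope_construction l m alpha beta rho u v
    using assms(1,2,8) by unfold_locales
  show ?thesis
    unfolding Let_def closed_form_u_def[symmetric] closed_form_v_def[symmetric]
      U_def[symmetric] V_def[symmetric]
    using slope_conditions_iff_defects_zero defects_zero_iff_twisted_recs
      twisted_recs_iff_sum_formulas sum_formulas_iff_closed_forms
    by blast
qed

end
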